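(* Let $n\ge1$, $\Theta\neq0$ a complex skew-symmetric $n\times n$ matrix, $\Gamma$ a discrete subgroup of $\mathrm{Aut}(\mathcal H,J_\Theta)$ and $p\in\mathcal H$. Consider all points $(q^0,0')$ with $q^0\in i\mathbb R$ (finite boundary points of $\mathcal H$ on the $z^0$-axis) that arise as limits $\lim_{\nu\to\infty}\phi_\nu(p)$ for sequences $(\phi_\nu)$ of pairwise distinct elements of $\Gamma$. Then there is at most one such point; i.e. the set of accumulation points of the orbit $\Gamma\cdot p$ lying in $\partial\mathcal H\cap(\mathbb C\times\{0'\})$ has at most one element (the only other possible accumulation point on the $z^0$-axis being the point at infinity $(\infty,0')$).
   Context: Write points of $\mathbb C^{n+1}$ as $z=(z^0,z')$, $z'=(z^1,\dots,z^n)$. $\mathcal H=\{(z^0,z')\in\mathbb C\times\mathbb C^n:\ \mathrm{Re}\,z^0+\|z'\|^2<0\}$. For a complex skew-symmetric $n\times n$ matrix $\Theta=(\Theta_{\alpha\beta})$, $J_\Theta$ is the almost complex structure on $\mathbb C^{n+1}$ $J_\Theta=i\frac{\partial}{\partial z^0}\otimes dz^0+\sum_\alpha\big(i\frac{\partial}{\partial z^\alpha}+2\sum_\beta\Theta_{\alpha\beta}z^\beta\frac{\partial}{\partial \bar z^0}\big)\otimes dz^\alpha-i\frac{\partial}{\partial \bar z^0}\otimes d\bar z^0+\sum_\alpha\big(-i\frac{\partial}{\partial \bar z^\alpha}+2\sum_\beta\overline{\Theta_{\alpha\beta}}\bar z^\beta\frac{\partial}{\partial z^0}\big)\otimes d\bar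 z^\alpha$. $\mathrm{Aut}(\mathcal H,J_\Theta)$ is the group of $J_\Theta$-holomorphic diffeomorphisms of $\mathcal H$ with compact-open topology. $U_\Theta=\{A\in\mathbb C^{n\times n}: A^t\bar A=I,\ A^t\Theta A=\Theta\}$. For $w'\in\mathbb C^n$, $h_{w'}(z')=-\|w'\|^2-2\langle z',\bar w'\rangle+i\big(\sum\Theta_{\alpha\beta}z^\alpha w^\beta+\sum\overline{\Theta_{\alpha\beta}}\,\bar z^\alpha\bar w^\beta\big)$, with $\langle z',\bar w'\rangle=\sum_\alpha z^\alpha\bar w^\alpha$. It is known (and may be assumed) that for $\Theta\neq0$ every $\phi\in\mathrm{Aut}(\mathcal H,J_\Theta)$ can be written uniquely as $\phi(z)=(tz^0+h_{w'}(z')+is,\ t^{1/2}Az'+w')$ with $t>0$, $s\in\mathbb R$, $w'\in\mathbb C^n$, $A\in U_\Theta$, and every such map is an automorphism. *)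

theory Defs
  imports "HOL-Analysis.Analysis"
begin

text \<open>Points of C^(n+1) are pairs (z0, z') with z' :: complex^'n; the index type 'n
  (finite, hence nonempty) encodes n \<ge> 1.\<close>

type_synonym 'n pt = "complex \<times> (complex ^ 'n)"

definition siegel_H :: "'n::finite pt set" where
  "siegel_H = {(z0, z'). Re z0 + (\<Sum>a\<in>UNIV. (cmod (z' $ a))\<^sup>2) < 0}"

definition skew :: "complex ^ 'n ^ 'n \<Rightarrow> bool" where
  "skew \<Theta> \<longleftrightarrow> transpose \<Theta> = - \<Theta>"

definition U_Theta :: "complex ^ 'n::finite ^ 'n \<Rightarrow> (complex ^ 'n ^ 'n) set" where
  "U_Theta \<Theta> = {A. transpose A ** (\<chi> i j. cnj (A $ i $ j)) = mat 1
                     \<and> transpose A ** \<Theta> ** A = \<Theta>}"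

definition h_w :: "complex ^ 'n::finite ^ 'n \<Rightarrow> complex ^ 'n \<Rightarrow> complex ^ 'n \<Rightarrow> complex" where
  "h_w \<Theta> w z' =
     - of_real (\<Sum>a\<in>UNIV. (cmod (w $ a))\<^sup>2)
     - 2 * (\<Sum>a\<in>UNIV. z' $ a * cnj (w $ a))
     + \<i> * ((\<Sum>a\<in>UNIV. \<Sum>b\<in>UNIV. \<Theta> $ a $ b * z' $ a * w $ b)
           + (\<Sum>a\<in>UNIV. \<Sum>b\<in>UNIV. cnj (\<Theta> $ a $ b) * cnj (z' $ a) * cnj (w $ b)))"

text \<open>Aut(H, J_Theta) for Theta \<noteq> 0, via the (assumed) explicit parametrization.\<close>
definition Aut_H :: "complex ^ 'n::finite ^ 'n \<Rightarrow> ('n pt \<Rightarrow> 'n pt) set" where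
  "Aut_H \<Theta> = {\<phi>. \<exists>t s w A. t > 0 \<and> A \<in> U_Theta \<Theta> \<and>
      \<phi> = (\<lambda>(z0, z'). (of_real t * z0 + h_w \<Theta> w z' + \<i> * of_real s,
                         of_real (sqrt t) *s (A *v z') + w))}"

definition co_open :: "('n::finite pt \<Rightarrow> 'n pt) set \<Rightarrow> bool" where
  "co_open W \<longleftrightarrow> generate_topology
      {{f. f ` K \<subseteq> U} | K U. compact K \<and> K \<subseteq> siegel_H \<and> open U} W"

definition subgroup_Aut :: "complex ^ 'n::finite ^ 'n \<Rightarrow> ('n pt \<Rightarrow> 'n pt) set \<Rightarrow> bool" where
  "subgroup_Aut \<Theta> G \<longleftrightarrow> G \<subseteq> Aut_H \<Theta> \<and> id \<in> G
     \<and> (\<forall>\<phi>\<in>G. \<forall>\<psi>\<in>G. \<exists>g\<in>G. \<forall>z\<in>siegel_H. g z = \<phi> (\<psi> z))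
     \<and> (\<forall>\<phi>\<in>G. \<exists>\<psi>\<in>G. \<forall>z\<in>siegel_H. \<psi> (\<phi> z) = z \<and> \<phi> (\<psi> z) = z)"

definition discrete_subgroup :: "complex ^ 'n::finite ^ 'n \<Rightarrow> ('n pt \<Rightarrow> 'n pt) set \<Rightarrow> bool" where
  "discrete_subgroup \<Theta> G \<longleftrightarrow> subgroup_Aut \<Theta> G
     \<and> (\<forall>\<phi>\<in>G. \<exists>W. co_open W \<and> W \<inter> G = {\<phi>})"

end

theory Submission
  imports Defs
begin

text \<open>
  Suppose \<open>\<phi>\<^sub>\<nu> p \<longrightarrow> (q, 0)\<close> with \<open>Re q = 0\<close>. Since \<open>Re (\<phi>\<^sub>\<nu> p)\<^sub>0 \<longrightarrow> 0 > Re p\<^sub>0 + \<parallel>p'\<parallel>\<^sup>2\<close>,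
  eventually \<open>\<phi>\<^sub>\<nu>\<close> has dilation factor \<open>t\<^sub>\<nu> \<noteq> 1\<close>; together with its inverse lying in \<open>\<Gamma>\<close> this
  kills the translation part, so \<open>\<phi>\<^sub>\<nu>(z\<^sub>0, z') = (t\<^sub>\<nu> z\<^sub>0 + i s\<^sub>\<nu>, \<surd>t\<^sub>\<nu> A\<^sub>\<nu> z')\<close> with
  \<open>t\<^sub>\<nu> \<longrightarrow> 0\<close> and \<open>s\<^sub>\<nu> \<longrightarrow> Im q\<close>. Discreteness of \<open>\<Gamma>\<close>, combined with compactness of the unitary
  group, means that a sequence of such dilations in \<open>\<Gamma>\<close> whose parameters \<open>(t, s)\<close> converge
  with positive limit \<open>t\<close> must attain the limit \<open>s\<close>. Conjugating one fixed dilation \<open>(\<tau>, \<sigma>)\<close>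
  of \<open>\<Gamma>\<close> with \<open>0 < \<tau> < 1\<close> by \<open>\<phi>\<^sub>\<nu>\<close> gives dilations \<open>(\<tau>, (1 - \<tau>) s\<^sub>\<nu> + t\<^sub>\<nu> \<sigma>)\<close>, so \<open>\<Gamma>\<close>
  contains a dilation \<open>(\<tau>, (1 - \<tau>) Im q)\<close>. Doing this for two limits \<open>q\<^sub>1, q\<^sub>2\<close> and composing
  yields a vertical translation in \<open>\<Gamma>\<close> by \<open>\<delta> = (1 - \<tau>) (Im q\<^sub>2 - Im q\<^sub>1) / \<tau>\<close>, whose
  conjugates by \<open>\<phi>\<^sub>\<nu>\<close> translate by \<open>t\<^sub>\<nu> \<delta> \<longrightarrow> 0\<close>; discreteness forces \<open>\<delta> = 0\<close>.
\<close>

section \<open>Unitary matrices\<close>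

definition ctranspose :: "complex^'n^'m \<Rightarrow> complex^'m^'n" where
  "ctranspose A = (\<chi> i j. cnj (A $ j $ i))"

definition unitary :: "complex^'n^'n \<Rightarrow> bool" where
  "unitary A \<longleftrightarrow> ctranspose A ** A = mat 1 \<and> A ** ctranspose A = mat 1"

definition cinner :: "complex^'n \<Rightarrow> complex^'n \<Rightarrow> complex" where
  "cinner x y = (\<Sum>i\<in>UNIV. x$i * cnj (y$i))"

lemma inner_eq_Re_cinner: "x \<bullet> y = Re (cinner x y)"
  unfolding inner_vec_def cinner_def inner_complex_def by (simp add: Re_sum)

lemma cinner_matrix_vector_mult: "cinner (A *v x) y = cinner x (ctranspose A *v y)"
proof -
  have "cinner (A *v x) y = (\<Sum>i\<in>UNIV. \<Sum>j\<in>UNIV. A$i$j * x$j * cnj (y$i))"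
    by (simp add: cinner_def matrix_vector_mult_def sum_distrib_right)
  also have "\<dots> = (\<Sum>j\<in>UNIV. \<Sum>i\<in>UNIV. A$i$j * x$j * cnj (y$i))"
    by (rule sum.swap)
  also have "\<dots> = cinner x (ctranspose A *v y)"
    by (simp add: cinner_def matrix_vector_mult_def ctranspose_def sum_distrib_left cnj_sum mult_ac)
  finally show ?thesis .
qed

lemma norm_unitary_mult: assumes "unitary A" shows "norm (A *v x) = norm x"
proof -
  have "(norm (A *v x))\<^sup>2 = Re (cinner (A *v x) (A *v x))"
    by (simp add: power2_norm_eq_inner inner_eq_Re_cinner)
  also have "\<dots> = Re (cinner x ((ctranspose A ** A) *v x))"
    by (simp add: cinner_matrix_vector_mult matrix_vector_mul_assoc)
  also have "\<dots> = (norm x)\<^sup>2"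
    using assms by (simp add: unitary_def power2_norm_eq_inner inner_eq_Re_cinner)
  finally show ?thesis by (simp add: power2_eq_iff_nonneg)
qed

lemma ctranspose_ctranspose [simp]: "ctranspose (ctranspose A) = A"
  by (simp add: ctranspose_def vec_eq_iff)

lemma ctranspose_matrix_mult: "ctranspose (A ** B) = ctranspose B ** ctranspose A"
  by (simp add: ctranspose_def vec_eq_iff matrix_matrix_mult_def cnj_sum mult.commute)

lemma unitary_ctranspose: "unitary A \<Longrightarrow> unitary (ctranspose A)"
  by (simp add: unitary_def)

lemma unitary_matrix_mult: "unitary A \<Longrightarrow> unitary B \<Longrightarrow> unitary (A ** B)"
  by (simp add: unitary_def ctranspose_matrix_mult matrix_mul_assoc)
     (metis matrix_mul_assoc matrix_mul_lid matrix_mul_rid)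

lemma U_Theta_unitary: assumes "A \<in> U_Theta \<Theta>" shows "unitary A"
proof -
  have "ctranspose A ** A = (\<chi> i j. cnj ((transpose A ** (\<chi> i j. cnj (A $ i $ j))) $ i $ j))"
    by (simp add: vec_eq_iff ctranspose_def matrix_matrix_mult_def transpose_def cnj_sum mult.commute)
  also have "\<dots> = mat 1"
    using assms by (simp add: U_Theta_def vec_eq_iff mat_def)
  finally have left: "ctranspose A ** A = mat 1" .
  then have "A ** ctranspose A = mat 1"
    using matrix_left_right_inverse by blast
  with left show ?thesis by (simp add: unitary_def)
qed

lemma norm_matrix_vector_mult_le:
  "norm ((M::complex^'n^'n) *v x) \<le> (real CARD('n))\<^sup>2 * norm M * norm x"
proof -
  have entry: "norm ((M *v x)$i) \<le> real CARD('n) * (norm M * norm x)" for i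
  proof -
    have "norm ((M *v x)$i) \<le> (\<Sum>j\<in>UNIV. norm (M$i$j * x$j))"
      unfolding matrix_vector_mult_def by (simp add: norm_sum)
    also have "\<dots> \<le> (\<Sum>j\<in>(UNIV::'n set). norm M * norm x)"
    proof (rule sum_mono)
      fix j
      have "norm (M$i$j) \<le> norm M"
        using Finite_Cartesian_Product.norm_nth_le[of "M$i" j] Finite_Cartesian_Product.norm_nth_le[of M i] by linarith
      then show "norm (M$i$j * x$j) \<le> norm M * norm x"
        by (simp add: norm_mult mult_mono Finite_Cartesian_Product.norm_nth_le)
    qed
    finally show ?thesis by simp
  qed
  have "norm (M *v x) \<le> (\<Sum>i\<in>UNIV. norm ((M *v x)$i))"
    unfolding norm_vec_def by (rule L2_set_le_sum) simp
  also have "\<dots> \<le> (\<Sum>i\<in>(UNIV::'n set). real CARD('n) * (norm M * norm x))"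
    by (rule sum_mono) (rule entry)
  finally show ?thesis by (simp add: power2_eq_square)
qed

lemma norm_unitary_le: assumes "unitary (A::complex^'n^'n)" shows "norm A \<le> real CARD('n)"
proof -
  have row: "norm (A$i) = 1" for i
  proof -
    have "cinner (A$i) (A$i) = (A ** ctranspose A)$i$i"
      by (simp add: cinner_def matrix_matrix_mult_def ctranspose_def)
    also have "\<dots> = 1" using assms by (simp add: unitary_def mat_def)
    finally have "(norm (A$i))\<^sup>2 = 1" by (simp add: power2_norm_eq_inner inner_eq_Re_cinner)
    then show ?thesis using norm_ge_zero[of "A$i"] by (auto simp: power2_eq_1_iff)
  qed
  have "norm A \<le> (\<Sum>i\<in>UNIV. norm (A$i))"
    unfolding norm_vec_def by (rule L2_set_le_sum) simp
  then show ?thesis by (simp add: row)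
qed

section \<open>The automorphisms\<close>

lemma siegel_H_iff: "z \<in> siegel_H \<longleftrightarrow> Re (fst z) + (norm (snd z))\<^sup>2 < 0"
  by (cases z) (simp add: siegel_H_def norm_vec_def L2_set_def sum_nonneg)

lemma Re_h_w: "Re (h_w \<Theta> w z') = - (norm w)\<^sup>2 - 2 * (z' \<bullet> w)"
proof -
  let ?X = "\<Sum>a\<in>UNIV. \<Sum>b\<in>UNIV. \<Theta> $ a $ b * z' $ a * w $ b"
  have conj: "(\<Sum>a\<in>UNIV. \<Sum>b\<in>UNIV. cnj (\<Theta> $ a $ b) * cnj (z' $ a) * cnj (w $ b)) = cnj ?X"
    by (simp only: cnj_sum complex_cnj_mult)
  have "Re (\<i> * (?X + cnj ?X)) = 0"
    by (subst complex_add_cnj) simp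
  moreover have "Re (\<Sum>a\<in>UNIV. z' $ a * cnj (w $ a)) = z' \<bullet> w"
    by (simp add: inner_eq_Re_cinner cinner_def)
  ultimately show ?thesis
    unfolding h_w_def conj by (simp add: norm_vec_def L2_set_def sum_nonneg)
qed

definition aut_map ::
    "complex^'n^'n \<Rightarrow> real \<Rightarrow> real \<Rightarrow> complex^'n \<Rightarrow> complex^'n^'n \<Rightarrow> 'n::finite pt \<Rightarrow> 'n pt" where
  "aut_map \<Theta> t s w A = (\<lambda>(z0, z'). (of_real t * z0 + h_w \<Theta> w z' + \<i> * of_real s,
                                     of_real (sqrt t) *s (A *v z') + w))"

definition dilation :: "real \<Rightarrow> real \<Rightarrow> complex^'n^'n \<Rightarrow> 'n::finite pt \<Rightarrow> 'n pt" where
  "dilation t s A = (\<lambda>(z0, z'). (of_real t * z0 + \<i> * of_real s, of_real (sqrt t) *s (A *v z')))"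

lemma Aut_H_elim:
  assumes "\<phi> \<in> Aut_H \<Theta>"
  obtains t s w A where "t > 0" "unitary A" "\<phi> = aut_map \<Theta> t s w A"
  using assms U_Theta_unitary unfolding Aut_H_def aut_map_def by blast

lemma aut_map_translation_0: "aut_map \<Theta> t s 0 A = dilation t s A"
  by (simp add: aut_map_def dilation_def h_w_def)

lemma of_real_vector_scalar_mult: "of_real r *s (v::complex^'n) = r *\<^sub>R v"
  by (simp add: vec_eq_iff scaleR_conv_of_real[where 'a = complex])

lemma matrix_vector_mult_scaleR: "(A::complex^'n^'m) *v (r *\<^sub>R v) = r *\<^sub>R (A *v v)"
  by (simp add: vec_eq_iff matrix_vector_mult_def scaleR_sum_right)

lemma Re_fst_aut_map:
  "Re (fst (aut_map \<Theta> t s w A (z0, v))) = t * Re z0 - (norm w)\<^sup>2 - 2 * (v \<bullet> w)"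
  by (simp add: aut_map_def Re_h_w)

lemma snd_aut_map: "snd (aut_map \<Theta> t s w A (z0, v)) = sqrt t *\<^sub>R (A *v v) + w"
  by (simp add: aut_map_def of_real_vector_scalar_mult)

lemma dilation_apply:
  "dilation t s A (z0, v) = (of_real t * z0 + \<i> * of_real s, sqrt t *\<^sub>R (A *v v))"
  by (simp add: dilation_def of_real_vector_scalar_mult)

lemma dilation_in_siegel_H:
  assumes "t > 0" "unitary A" "z \<in> siegel_H"
  shows "dilation t s A z \<in> siegel_H"
proof (cases z)
  case (Pair z0 v)
  have "t * (Re z0 + (norm v)\<^sup>2) < 0"
    using assms Pair by (simp add: siegel_H_iff mult_pos_neg)
  moreover have "(norm (sqrt t *\<^sub>R (A *v v)))\<^sup>2 = t * (norm v)\<^sup>2"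
    using assms(1,2) by (simp add: norm_unitary_mult power_mult_distrib)
  ultimately show ?thesis
    using Pair by (simp add: siegel_H_iff dilation_apply algebra_simps)
qed

lemma dilation_dilation:
  assumes "t1 > 0" "t2 > 0"
  shows "dilation t1 s1 A1 (dilation t2 s2 A2 z) = dilation (t1 * t2) (t1 * s2 + s1) (A1 ** A2) z"
  using assms by (cases z)
    (simp add: dilation_apply matrix_vector_mult_scaleR matrix_vector_mul_assoc
      real_sqrt_mult algebra_simps)

lemma dilation_inverse:
  assumes "t > 0" "unitary A"
  shows "dilation t s A (dilation (1/t) (-s/t) (ctranspose A) z) = z"
proof -
  have "dilation t s A (dilation (1/t) (-s/t) (ctranspose A) z) = dilation 1 0 (mat 1) z"
    using assms by (simp add: dilation_dilation unitary_def)
  then show ?thesis by (cases z) (simp add: dilation_apply)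
qed

text \<open>
  A map in \<open>Aut_H \<Theta>\<close> with \<open>w \<noteq> 0\<close> has a left inverse in \<open>Aut_H \<Theta>\<close> only if its dilation
  factor is \<open>1\<close>: in the given parametrization \<open>h_w\<close> is evaluated at \<open>z'\<close> rather than at
  \<open>\<surd>t A z'\<close>, so such maps are not closed under inversion.
\<close>

lemma aut_map_left_inverse:
  assumes "t > 0" "t' > 0" "unitary A" "unitary A'"
    and inv: "\<forall>z\<in>siegel_H. aut_map \<Theta> t' s' w' A' (aut_map \<Theta> t s w A z) = z"
  shows "w' = - (sqrt t' *\<^sub>R (A' *v w))" and "t * t' = 1" and "t' * (norm w)\<^sup>2 \<le> (norm w)\<^sup>2"
proof -
  have eq: "t' * (t * x - (norm w)\<^sup>2 - 2 * (v \<bullet> w)) - (norm w')\<^sup>2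
              - 2 * ((sqrt t *\<^sub>R (A *v v) + w) \<bullet> w') = x
          \<and> sqrt t' *\<^sub>R (A' *v (sqrt t *\<^sub>R (A *v v) + w)) + w' = v"
    if "x + (norm v)\<^sup>2 < 0" for x v
  proof -
    let ?y = "aut_map \<Theta> t s w A (of_real x, v)"
    have "aut_map \<Theta> t' s' w' A' (fst ?y, snd ?y) = (of_real x, v)"
      using inv that by (simp add: siegel_H_iff)
    then have "Re (fst (aut_map \<Theta> t' s' w' A' (fst ?y, snd ?y))) = x"
      and "snd (aut_map \<Theta> t' s' w' A' (fst ?y, snd ?y)) = v"
      by simp_all
    then show ?thesis by (simp add: Re_fst_aut_map snd_aut_map)
  qed
  have at0: "t' * (t * x - (norm w)\<^sup>2) - (norm w')\<^sup>2 - 2 * (w \<bullet> w') = x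
             \<and> sqrt t' *\<^sub>R (A' *v w) + w' = 0" if "x < 0" for x
    using eq[of x 0] that by (simp add: matrix_vector_mult_0_right)
  show w': "w' = - (sqrt t' *\<^sub>R (A' *v w))"
    using at0[of "-1"] by (simp add: eq_neg_iff_add_eq_0 add.commute)
  show "t * t' = 1"
    using at0[of "-1"] at0[of "-2"] by (simp add: algebra_simps)
  have "sqrt t * sqrt t' = 1"
    using \<open>t * t' = 1\<close> by (metis real_sqrt_mult real_sqrt_one)
  \<comment> \<open>comparing the images of \<open>(x, w)\<close> and \<open>(x, 0)\<close> isolates \<open>(A *v w) \<bullet> w'\<close>\<close>
  define x where "x = - 1 - (norm w)\<^sup>2"
  have "x + (norm w)\<^sup>2 < 0" "x < 0"
    unfolding x_def using zero_le_power2[of "norm w"] by linarith+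
  from eq[OF this(1)] at0[OF this(2)]
  have "t' * (norm w)\<^sup>2 = - (sqrt t * ((A *v w) \<bullet> w'))"
    by (simp add: power2_norm_eq_inner inner_add_left algebra_simps)
  also have "\<dots> = (A *v w) \<bullet> (A' *v w)"
    using \<open>sqrt t * sqrt t' = 1\<close> by (simp add: w' mult.assoc[symmetric])
  also have "\<dots> \<le> norm (A *v w) * norm (A' *v w)"
    by (rule norm_cauchy_schwarz)
  also have "\<dots> = (norm w)\<^sup>2"
    using assms(3,4) by (simp add: norm_unitary_mult power2_eq_square)
  finally show "t' * (norm w)\<^sup>2 \<le> (norm w)\<^sup>2" .
qed

lemma subgroup_Aut_translation_0:
  assumes sub: "subgroup_Aut \<Theta> \<Gamma>" and "\<phi> \<in> \<Gamma>"
    and "t > 0" "unitary A" "\<phi> = aut_map \<Theta> t s w A" "t \<noteq> 1"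
  shows "w = 0"
proof (rule ccontr)
  assume "w \<noteq> 0"
  obtain \<psi> where \<psi>: "\<psi> \<in> \<Gamma>" "\<forall>z\<in>siegel_H. \<psi> (\<phi> z) = z \<and> \<phi> (\<psi> z) = z"
    using sub \<open>\<phi> \<in> \<Gamma>\<close> unfolding subgroup_Aut_def by blast
  then have "\<psi> \<in> Aut_H \<Theta>" using sub unfolding subgroup_Aut_def by blast
  then obtain t' s' w' A' where \<psi>': "t' > 0" "unitary A'" "\<psi> = aut_map \<Theta> t' s' w' A'"
    by (rule Aut_H_elim)
  note left = aut_map_left_inverse[of t t' A A' \<Theta> s' w' s w]
  note right = aut_map_left_inverse[of t' t A' A \<Theta> s w s' w']
  have "t * t' = 1" using left assms \<psi> \<psi>' by simp
  have "t' \<le> 1" using left(3) assms \<psi> \<psi>' \<open>w \<noteq> 0\<close> by simp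
  moreover have "w' \<noteq> 0" using right(1) assms \<psi> \<psi>' \<open>w \<noteq> 0\<close> by auto
  then have "t \<le> 1" using right(3) assms \<psi> \<psi>' by simp
  moreover have "t * t' \<le> t" using \<open>t' \<le> 1\<close> \<open>t > 0\<close> by (simp add: mult_left_le)
  ultimately have "t = 1" using \<open>t * t' = 1\<close> by linarith
  with \<open>t \<noteq> 1\<close> show False ..
qed

lemma subgroup_Aut_dilation_if_Re_gt:
  assumes sub: "subgroup_Aut \<Theta> \<Gamma>" and "\<phi> \<in> \<Gamma>"
    and gt: "Re p0 + (norm p')\<^sup>2 < Re (fst (\<phi> (p0, p')))"
  obtains t s A where "t > 0" "unitary A" "\<phi> = dilation t s A"
proof -
  have "\<phi> \<in> Aut_H \<Theta>" using sub \<open>\<phi> \<in> \<Gamma>\<close> unfolding subgroup_Aut_def by blast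
  then obtain t s w A where tsA: "t > 0" "unitary A" "\<phi> = aut_map \<Theta> t s w A"
    by (rule Aut_H_elim)
  have "t \<noteq> 1"
  proof
    assume "t = 1"
    have "0 \<le> (norm (w + p'))\<^sup>2" by simp
    also have "\<dots> = (norm w)\<^sup>2 + 2 * (p' \<bullet> w) + (norm p')\<^sup>2"
      by (simp add: power2_norm_eq_inner inner_add_left inner_add_right inner_commute)
    finally show False
      using gt tsA(3) \<open>t = 1\<close> by (simp add: Re_fst_aut_map)
  qed
  then have "w = 0" using subgroup_Aut_translation_0[OF sub \<open>\<phi> \<in> \<Gamma>\<close> tsA] by simp
  then show thesis using that tsA by (simp add: aut_map_translation_0)
qed

section \<open>Dilations in a subgroup\<close>

definition acts_as_dilation :: "('n::finite pt \<Rightarrow> 'n pt) \<Rightarrow> real \<Rightarrow> real \<Rightarrow> complex^'n^'n \<Rightarrow> bool"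
  where "acts_as_dilation g t s A \<longleftrightarrow> t > 0 \<and> unitary A \<and> (\<forall>z\<in>siegel_H. g z = dilation t s A z)"

lemma subgroup_Aut_dilation_comp:
  assumes sub: "subgroup_Aut \<Theta> \<Gamma>" and "g1 \<in> \<Gamma>" "g2 \<in> \<Gamma>"
    and g1: "acts_as_dilation g1 t1 s1 A1" and g2: "acts_as_dilation g2 t2 s2 A2"
  shows "\<exists>g\<in>\<Gamma>. acts_as_dilation g (t1 * t2) (t1 * s2 + s1) (A1 ** A2)"
proof -
  obtain g where "g \<in> \<Gamma>" and g: "\<forall>z\<in>siegel_H. g z = g1 (g2 z)"
    using sub \<open>g1 \<in> \<Gamma>\<close> \<open>g2 \<in> \<Gamma>\<close> unfolding subgroup_Aut_def by blast
  have "g z = dilation (t1 * t2) (t1 * s2 + s1) (A1 ** A2) z" if "z \<in> siegel_H" for z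
    using g1 g2 g that dilation_in_siegel_H[of t2 A2 z s2]
    by (simp add: acts_as_dilation_def dilation_dilation)
  with g1 g2 have "acts_as_dilation g (t1 * t2) (t1 * s2 + s1) (A1 ** A2)"
    by (simp add: acts_as_dilation_def unitary_matrix_mult)
  with \<open>g \<in> \<Gamma>\<close> show ?thesis by blast
qed

lemma subgroup_Aut_dilation_inverse:
  assumes sub: "subgroup_Aut \<Theta> \<Gamma>" and "g \<in> \<Gamma>" and g: "acts_as_dilation g t s A"
  shows "\<exists>\<psi>\<in>\<Gamma>. acts_as_dilation \<psi> (1/t) (-s/t) (ctranspose A)"
proof -
  obtain \<psi> where "\<psi> \<in> \<Gamma>" and \<psi>: "\<forall>z\<in>siegel_H. \<psi> (g z) = z"
    using sub \<open>g \<in> \<Gamma>\<close> unfolding subgroup_Aut_def by blast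
  have tA: "t > 0" "unitary A" using g by (auto simp: acts_as_dilation_def)
  have "\<psi> y = dilation (1/t) (-s/t) (ctranspose A) y" if "y \<in> siegel_H" for y
  proof -
    let ?x = "dilation (1/t) (-s/t) (ctranspose A) y"
    have "?x \<in> siegel_H"
      by (intro dilation_in_siegel_H) (simp_all add: tA that unitary_ctranspose)
    moreover have "g ?x = y"
      using g \<open>?x \<in> siegel_H\<close> dilation_inverse[OF tA] by (simp add: acts_as_dilation_def)
    ultimately show ?thesis using \<psi> by metis
  qed
  with tA have "acts_as_dilation \<psi> (1/t) (-s/t) (ctranspose A)"
    by (simp add: acts_as_dilation_def unitary_ctranspose)
  with \<open>\<psi> \<in> \<Gamma>\<close> show ?thesis by blast
qed

lemma subgroup_Aut_dilation_quotient:
  assumes sub: "subgroup_Aut \<Theta> \<Gamma>" and "g1 \<in> \<Gamma>" "g2 \<in> \<Gamma>"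
    and g1: "acts_as_dilation g1 \<tau> \<sigma>1 B1" and g2: "acts_as_dilation g2 \<tau> \<sigma>2 B2"
  shows "\<exists>g\<in>\<Gamma>. acts_as_dilation g 1 ((\<sigma>2 - \<sigma>1) / \<tau>) (ctranspose B1 ** B2)"
proof -
  have "\<tau> > 0" using g1 by (simp add: acts_as_dilation_def)
  obtain \<psi> where "\<psi> \<in> \<Gamma>" "acts_as_dilation \<psi> (1/\<tau>) (-\<sigma>1/\<tau>) (ctranspose B1)"
    using subgroup_Aut_dilation_inverse[OF sub \<open>g1 \<in> \<Gamma>\<close> g1] by blast
  from subgroup_Aut_dilation_comp[OF sub this(1) \<open>g2 \<in> \<Gamma>\<close> this(2) g2]
  have "\<exists>g\<in>\<Gamma>. acts_as_dilation g (1/\<tau> * \<tau>) (1/\<tau> * \<sigma>2 + -\<sigma>1/\<tau>) (ctranspose B1 ** B2)" .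
  moreover have "1/\<tau> * \<tau> = 1" "1/\<tau> * \<sigma>2 + -\<sigma>1/\<tau> = (\<sigma>2 - \<sigma>1) / \<tau>"
    using \<open>\<tau> > 0\<close> by (simp_all add: diff_divide_distrib)
  ultimately show ?thesis by simp
qed

lemma subgroup_Aut_dilation_conj:
  assumes sub: "subgroup_Aut \<Theta> \<Gamma>" and "\<phi> \<in> \<Gamma>" "g \<in> \<Gamma>"
    and \<phi>: "acts_as_dilation \<phi> t s A" and g: "acts_as_dilation g \<tau> \<sigma> B"
  shows "\<exists>c\<in>\<Gamma>. acts_as_dilation c \<tau> ((1 - \<tau>) * s + t * \<sigma>) (A ** B ** ctranspose A)"
proof -
  have "t > 0" using \<phi> by (simp add: acts_as_dilation_def)
  obtain \<psi> where "\<psi> \<in> \<Gamma>" "acts_as_dilation \<psi> (1/t) (-s/t) (ctranspose A)"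
    using subgroup_Aut_dilation_inverse[OF sub \<open>\<phi> \<in> \<Gamma>\<close> \<phi>] by blast
  then obtain g' where "g' \<in> \<Gamma>" "acts_as_dilation g' (\<tau> * (1/t)) (\<tau> * (-s/t) + \<sigma>) (B ** ctranspose A)"
    using subgroup_Aut_dilation_comp[OF sub \<open>g \<in> \<Gamma>\<close> _ g] by blast
  from subgroup_Aut_dilation_comp[OF sub \<open>\<phi> \<in> \<Gamma>\<close> this(1) \<phi> this(2)]
  have "\<exists>c\<in>\<Gamma>. acts_as_dilation c (t * (\<tau> * (1/t))) (t * (\<tau> * (-s/t) + \<sigma>) + s) (A ** (B ** ctranspose A))" .
  moreover have "t * (\<tau> * (1/t)) = \<tau>" "t * (\<tau> * (-s/t) + \<sigma>) + s = (1 - \<tau>) * s + t * \<sigma>"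
    using \<open>t > 0\<close> by (simp_all add: field_simps)
  ultimately show ?thesis by (simp only: matrix_mul_assoc)
qed

section \<open>Discreteness\<close>

lemma co_open_eventually_mem:
  fixes f :: "nat \<Rightarrow> ('n::finite pt \<Rightarrow> 'n pt)"
  assumes "co_open W" "id \<in> W"
    and unif: "\<And>K e. compact K \<Longrightarrow> K \<subseteq> siegel_H \<Longrightarrow> e > 0 \<Longrightarrow>
                 \<forall>\<^sub>F \<nu> in sequentially. \<forall>x\<in>K. dist (f \<nu> x) x < e"
  shows "\<forall>\<^sub>F \<nu> in sequentially. f \<nu> \<in> W"
proof -
  have "generate_topology {{f. f ` K \<subseteq> U} | K U. compact K \<and> K \<subseteq> siegel_H \<and> open U} W"
    using assms(1) by (simp add: co_open_def)
  then have "id \<in> W \<longrightarrow> (\<forall>\<^sub>F \<nu> in sequentially. f \<nu> \<in> W)"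
  proof (induction rule: generate_topology.induct)
    case UNIV
    then show ?case by simp
  next
    case (Int a b)
    then show ?case by (auto intro: eventually_conj)
  next
    case (UN K)
    show ?case
    proof
      assume "id \<in> \<Union>K"
      then obtain k where "k \<in> K" "id \<in> k" by blast
      with UN.IH have "\<forall>\<^sub>F \<nu> in sequentially. f \<nu> \<in> k" by blast
      then show "\<forall>\<^sub>F \<nu> in sequentially. f \<nu> \<in> \<Union>K"
        by (rule eventually_mono) (use \<open>k \<in> K\<close> in blast)
    qed
  next
    case (Basis s)
    then obtain K U where KU: "s = {f. f ` K \<subseteq> U}" "compact K" "K \<subseteq> siegel_H" "open U"
      by blast
    show ?case
    proof
      assume "id \<in> s"
      then have "K \<subseteq> U" using KU by simp
      then obtain e where "e > 0" and e: "(\<Union>x\<in>K. ball x e) \<subseteq> U"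
        using compact_subset_open_imp_ball_epsilon_subset[OF KU(2) KU(4)] by blast
      from unif[OF KU(2,3) \<open>e > 0\<close>] show "\<forall>\<^sub>F \<nu> in sequentially. f \<nu> \<in> s"
        by (rule eventually_mono) (use e KU(1) in \<open>fastforce simp: dist_commute\<close>)
    qed
  qed
  then show ?thesis using assms(2) by blast
qed

lemma dist_dilation_le:
  assumes "unitary A1" "unitary (A2::complex^'n^'n)" "norm z \<le> r"
  shows "dist (dilation \<tau> \<sigma> (ctranspose A1 ** A2) z) z
     \<le> \<bar>\<tau> - 1\<bar> * r + \<bar>\<sigma>\<bar> + \<bar>sqrt \<tau> - 1\<bar> * r + (real CARD('n))\<^sup>2 * norm (A2 - A1) * r"
proof (cases z)
  case (Pair z0 v)
  have z0: "norm z0 \<le> r" and v: "norm v \<le> r"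
    using assms(3) Pair norm_fst_le[of z0 v] norm_snd_le[of v z0] by auto
  have d1: "dist (of_real \<tau> * z0 + \<i> * of_real \<sigma>) z0 \<le> \<bar>\<tau> - 1\<bar> * r + \<bar>\<sigma>\<bar>"
  proof -
    have "dist (of_real \<tau> * z0 + \<i> * of_real \<sigma>) z0 = norm (of_real (\<tau> - 1) * z0 + \<i> * of_real \<sigma>)"
      by (simp add: dist_norm algebra_simps)
    also have "\<dots> \<le> \<bar>\<tau> - 1\<bar> * norm z0 + \<bar>\<sigma>\<bar>"
      by (rule order_trans[OF norm_triangle_ineq]) (simp add: norm_mult del: of_real_diff)
    finally show ?thesis using z0 by (smt (verit) mult_left_mono abs_ge_zero)
  qed
  let ?M = "ctranspose A1 ** A2"
  have "?M *v v - v = ctranspose A1 *v (A2 *v v) - ctranspose A1 *v (A1 *v v)"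
    using assms(1) by (simp add: matrix_vector_mul_assoc unitary_def)
  then have Mv: "?M *v v - v = ctranspose A1 *v ((A2 - A1) *v v)"
    by (simp add: matrix_vector_mult_diff_distrib matrix_vector_mult_diff_rdistrib)
  have d2: "dist (sqrt \<tau> *\<^sub>R (?M *v v)) v
            \<le> \<bar>sqrt \<tau> - 1\<bar> * r + (real CARD('n))\<^sup>2 * norm (A2 - A1) * r"
  proof -
    have "dist (sqrt \<tau> *\<^sub>R (?M *v v)) v = norm ((sqrt \<tau> - 1) *\<^sub>R (?M *v v) + (?M *v v - v))"
      by (simp add: dist_norm algebra_simps)
    also have "\<dots> \<le> norm ((sqrt \<tau> - 1) *\<^sub>R (?M *v v)) + norm (?M *v v - v)"
      by (rule norm_triangle_ineq)
    also have "\<dots> = \<bar>sqrt \<tau> - 1\<bar> * norm v + norm ((A2 - A1) *v v)"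
      using assms(1,2) by (simp add: Mv norm_unitary_mult unitary_ctranspose unitary_matrix_mult)
    also have "\<dots> \<le> \<bar>sqrt \<tau> - 1\<bar> * r + (real CARD('n))\<^sup>2 * norm (A2 - A1) * r"
      using norm_matrix_vector_mult_le[of "A2 - A1" v] v
      by (smt (verit) mult_left_mono abs_ge_zero zero_le_power2 norm_ge_zero of_nat_0_le_iff
          mult_nonneg_nonneg)
    finally show ?thesis .
  qed
  have "dist (dilation \<tau> \<sigma> ?M z) z
        \<le> dist (of_real \<tau> * z0 + \<i> * of_real \<sigma>) z0 + dist (sqrt \<tau> *\<^sub>R (?M *v v)) v"
    unfolding Pair dilation_apply dist_Pair_Pair by (rule sqrt_sum_squares_le_sum) auto
  then show ?thesis using d1 d2 by simp
qed

lemma dilations_tend_to_id_uniformly_on_compact: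
  fixes A1 A2 :: "nat \<Rightarrow> complex^'n^'n"
  assumes "\<And>\<nu>. unitary (A1 \<nu>)" "\<And>\<nu>. unitary (A2 \<nu>)"
    and \<tau>: "\<tau> \<longlonglongrightarrow> 1" and \<sigma>: "\<sigma> \<longlonglongrightarrow> 0" and A: "(\<lambda>\<nu>. norm (A2 \<nu> - A1 \<nu>)) \<longlonglongrightarrow> 0"
    and "compact K" "e > 0"
  shows "\<forall>\<^sub>F \<nu> in sequentially. \<forall>x\<in>K. dist (dilation (\<tau> \<nu>) (\<sigma> \<nu>) (ctranspose (A1 \<nu>) ** A2 \<nu>) x) x < e"
proof -
  obtain r where r: "\<forall>x\<in>K. norm x \<le> r"
    using compact_imp_bounded[OF \<open>compact K\<close>] unfolding bounded_iff by blast
  define E where "E \<nu> = \<bar>\<tau> \<nu> - 1\<bar> * r + \<bar>\<sigma> \<nu>\<bar> + \<bar>sqrt (\<tau> \<nu>) - 1\<bar> * r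
        + (real CARD('n))\<^sup>2 * norm (A2 \<nu> - A1 \<nu>) * r" for \<nu>
  have "E \<longlonglongrightarrow> \<bar>1 - 1\<bar> * r + \<bar>0\<bar> + \<bar>sqrt 1 - 1\<bar> * r + (real CARD('n))\<^sup>2 * 0 * r"
    unfolding E_def by (intro tendsto_intros \<tau> \<sigma> A)
  then have "\<forall>\<^sub>F \<nu> in sequentially. E \<nu> < e"
    using \<open>e > 0\<close> by (intro order_tendstoD) simp_all
  then show ?thesis
  proof (rule eventually_mono)
    fix \<nu> assume "E \<nu> < e"
    have "dist (dilation (\<tau> \<nu>) (\<sigma> \<nu>) (ctranspose (A1 \<nu>) ** A2 \<nu>) x) x \<le> E \<nu>" if "x \<in> K" for x
      unfolding E_def using dist_dilation_le[OF assms(1,2)] r that by blast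
    with \<open>E \<nu> < e\<close> show "\<forall>x\<in>K. dist (dilation (\<tau> \<nu>) (\<sigma> \<nu>) (ctranspose (A1 \<nu>) ** A2 \<nu>) x) x < e"
      by (meson le_less_trans)
  qed
qed

lemma discrete_dilations_eventually_vertical_0:
  fixes A1 A2 :: "nat \<Rightarrow> complex^'n::finite^'n"
  assumes disc: "discrete_subgroup \<Theta> \<Gamma>" and "\<And>\<nu>. h \<nu> \<in> \<Gamma>"
    and h: "\<And>\<nu>. acts_as_dilation (h \<nu>) (\<tau> \<nu>) (\<sigma> \<nu>) (ctranspose (A1 \<nu>) ** A2 \<nu>)"
    and "\<And>\<nu>. unitary (A1 \<nu>)" "\<And>\<nu>. unitary (A2 \<nu>)"
    and "\<tau> \<longlonglongrightarrow> 1" "\<sigma> \<longlonglongrightarrow> 0" "(\<lambda>\<nu>. norm (A2 \<nu> - A1 \<nu>)) \<longlonglongrightarrow> 0"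
  shows "\<forall>\<^sub>F \<nu> in sequentially. \<sigma> \<nu> = 0"
proof -
  have "id \<in> \<Gamma>" using disc by (simp add: discrete_subgroup_def subgroup_Aut_def)
  then obtain W where W: "co_open W" "W \<inter> \<Gamma> = {id}"
    using disc by (auto simp: discrete_subgroup_def)
  have "\<forall>\<^sub>F \<nu> in sequentially. h \<nu> \<in> W"
  proof (rule co_open_eventually_mem[OF W(1)])
    show "id \<in> W" using W(2) by blast
  next
    fix K :: "'n pt set" and e :: real
    assume "compact K" "K \<subseteq> siegel_H" "e > 0"
    from dilations_tend_to_id_uniformly_on_compact[OF assms(4-8) this(1,3)]
    show "\<forall>\<^sub>F \<nu> in sequentially. \<forall>x\<in>K. dist (h \<nu> x) x < e"
      by (rule eventually_mono)
        (use h \<open>K \<subseteq> siegel_H\<close> in \<open>auto simp: acts_as_dilation_def subset_iff\<close>)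
  qed
  then show ?thesis
  proof (rule eventually_mono)
    fix \<nu> assume "h \<nu> \<in> W"
    then have "h \<nu> = id" using W(2) \<open>h \<nu> \<in> \<Gamma>\<close> by blast
    moreover have "(-1 :: complex, 0 :: complex^'n) \<in> siegel_H" by (simp add: siegel_H_iff)
    ultimately have "dilation (\<tau> \<nu>) (\<sigma> \<nu>) (ctranspose (A1 \<nu>) ** A2 \<nu>) (-1, 0) = (-1, 0)"
      using h[of \<nu>] by (simp add: acts_as_dilation_def)
    then show "\<sigma> \<nu> = 0" by (simp add: dilation_apply complex_eq_iff)
  qed
qed

lemma LIMSEQ_not_attained_later_different:
  fixes s :: "nat \<Rightarrow> 'a::metric_space"
  assumes "s \<longlonglongrightarrow> S" "\<And>\<nu>. s \<nu> \<noteq> S"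
  obtains b where "\<And>\<nu>. \<nu> \<le> b \<nu>" "\<And>\<nu>. s (b \<nu>) \<noteq> s \<nu>"
proof -
  have "\<exists>m\<ge>\<nu>. s m \<noteq> s \<nu>" for \<nu>
  proof -
    have "\<forall>\<^sub>F m in sequentially. dist (s m) S < dist (s \<nu>) S"
      using assms by (intro tendstoD) simp_all
    then obtain N where "\<forall>m\<ge>N. dist (s m) S < dist (s \<nu>) S"
      by (auto simp: eventually_sequentially)
    then have "dist (s (max N \<nu>)) S < dist (s \<nu>) S" by simp
    then show ?thesis by (metis max.cobounded2 order_less_irrefl)
  qed
  with that show thesis by metis
qed

text \<open>
  Along a subsequence \<open>r\<close> on which the rotations converge, and with \<open>b \<nu> \<ge> \<nu>\<close> chosen so
  that \<open>s\<close> changes, the quotients \<open>\<gamma> (r \<nu>)\<inverse> \<circ> \<gamma> (r (b \<nu>))\<close> tend to the identity;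
  discreteness makes them eventually trivial, forcing \<open>s (r (b \<nu>)) = s (r \<nu>)\<close>.
\<close>

lemma discrete_dilation_limit_attained:
  fixes \<gamma> :: "nat \<Rightarrow> ('n::finite pt \<Rightarrow> 'n pt)" and A :: "nat \<Rightarrow> complex^'n^'n"
  assumes disc: "discrete_subgroup \<Theta> \<Gamma>" and \<gamma>: "\<And>\<nu>. \<gamma> \<nu> \<in> \<Gamma>"
    and R: "\<And>\<nu>. acts_as_dilation (\<gamma> \<nu>) (t \<nu>) (s \<nu>) (A \<nu>)"
    and t: "t \<longlonglongrightarrow> T" "T > 0" and s: "s \<longlonglongrightarrow> S"
  shows "\<exists>\<nu>. s \<nu> = S"
proof (rule ccontr)
  assume "\<not> ?thesis"
  then have ne: "s \<nu> \<noteq> S" for \<nu> by blast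
  have sub: "subgroup_Aut \<Theta> \<Gamma>" using disc by (simp add: discrete_subgroup_def)
  have tpos: "t \<nu> > 0" and uA: "unitary (A \<nu>)" for \<nu> using R by (auto simp: acts_as_dilation_def)
  have "bounded (range A)"
    unfolding bounded_iff using norm_unitary_le[OF uA] by blast
  then obtain B r where r: "strict_mono r" "(A \<circ> r) \<longlonglongrightarrow> B"
    using bounded_imp_convergent_subsequence by blast
  have tr: "(\<lambda>\<nu>. t (r \<nu>)) \<longlonglongrightarrow> T" and sr: "(\<lambda>\<nu>. s (r \<nu>)) \<longlonglongrightarrow> S"
    using LIMSEQ_subseq_LIMSEQ[OF t(1) r(1)] LIMSEQ_subseq_LIMSEQ[OF s r(1)] by (simp_all add: comp_def)
  obtain b where b: "\<And>\<nu>. \<nu> \<le> b \<nu>" "\<And>\<nu>. s (r (b \<nu>)) \<noteq> s (r \<nu>)"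
    using LIMSEQ_not_attained_later_different[OF sr ne] by blast
  have b_lim: "filterlim b sequentially sequentially"
    unfolding filterlim_at_top eventually_sequentially using b(1) order_trans by blast
  then have rb_lim: "filterlim (\<lambda>\<nu>. r (b \<nu>)) sequentially sequentially"
    by (rule filterlim_compose[OF filterlim_subseq[OF r(1)]])
  have trb: "(\<lambda>\<nu>. t (r (b \<nu>))) \<longlonglongrightarrow> T" and srb: "(\<lambda>\<nu>. s (r (b \<nu>))) \<longlonglongrightarrow> S"
    using filterlim_compose[OF t(1) rb_lim] filterlim_compose[OF s rb_lim] by simp_all
  define \<tau> where "\<tau> \<nu> = (1 / t (r \<nu>)) * t (r (b \<nu>))" for \<nu>
  define \<sigma> where "\<sigma> \<nu> = (1 / t (r \<nu>)) * s (r (b \<nu>)) + - s (r \<nu>) / t (r \<nu>)" for \<nu>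
  have "\<exists>h\<in>\<Gamma>. acts_as_dilation h (\<tau> \<nu>) (\<sigma> \<nu>) (ctranspose (A (r \<nu>)) ** A (r (b \<nu>)))" for \<nu>
  proof -
    obtain \<psi> where "\<psi> \<in> \<Gamma>" "acts_as_dilation \<psi> (1 / t (r \<nu>)) (- s (r \<nu>) / t (r \<nu>)) (ctranspose (A (r \<nu>)))"
      using subgroup_Aut_dilation_inverse[OF sub \<gamma> R] by blast
    from subgroup_Aut_dilation_comp[OF sub this(1) \<gamma> this(2) R] show ?thesis
      by (simp add: \<tau>_def \<sigma>_def)
  qed
  then obtain h where "\<And>\<nu>. h \<nu> \<in> \<Gamma>"
    "\<And>\<nu>. acts_as_dilation (h \<nu>) (\<tau> \<nu>) (\<sigma> \<nu>) (ctranspose (A (r \<nu>)) ** A (r (b \<nu>)))"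
    by metis
  moreover have "\<tau> \<longlonglongrightarrow> (1 / T) * T" "\<sigma> \<longlonglongrightarrow> (1 / T) * S + - S / T"
    unfolding \<tau>_def \<sigma>_def using \<open>T > 0\<close> by (intro tendsto_intros tr trb sr srb; simp)+
  moreover have "(\<lambda>\<nu>. norm (A (r (b \<nu>)) - A (r \<nu>))) \<longlonglongrightarrow> 0"
    using tendsto_diff[OF filterlim_compose[OF r(2) b_lim] r(2)]
    by (simp add: comp_def tendsto_norm_zero_iff)
  ultimately have "\<forall>\<^sub>F \<nu> in sequentially. \<sigma> \<nu> = 0"
    using t(2) uA by (intro discrete_dilations_eventually_vertical_0[OF disc]) simp_all
  then obtain \<nu> where "\<sigma> \<nu> = 0" by (auto simp: eventually_sequentially)
  with tpos[of "r \<nu>"] b(2)[of \<nu>] show False by (simp add: \<sigma>_def field_simps)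
qed

section \<open>Orbits approaching the axis\<close>

lemma orbit_to_axis_eventually_dilations:
  fixes \<phi> :: "nat \<Rightarrow> ('n::finite pt \<Rightarrow> 'n pt)"
  assumes sub: "subgroup_Aut \<Theta> \<Gamma>" and \<phi>: "\<And>\<nu>. \<phi> \<nu> \<in> \<Gamma>" and "p \<in> siegel_H"
    and lim: "(\<lambda>\<nu>. \<phi> \<nu> p) \<longlonglongrightarrow> (q, 0)" and "Re q = 0"
  shows "\<exists>N t s A. (\<forall>\<nu>. acts_as_dilation (\<phi> (\<nu> + N)) (t \<nu>) (s \<nu>) (A \<nu>))
                  \<and> t \<longlonglongrightarrow> 0 \<and> s \<longlonglongrightarrow> Im q"
proof -
  obtain p0 p' where p: "p = (p0, p')" by fastforce
  have "Re p0 + (norm p')\<^sup>2 < 0" using \<open>p \<in> siegel_H\<close> p by (simp add: siegel_H_iff)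
  then have "Re p0 < 0" by (smt (verit) zero_le_power2)
  have fst_lim: "(\<lambda>\<nu>. fst (\<phi> \<nu> p)) \<longlonglongrightarrow> q" using tendsto_fst[OF lim] by simp
  have "\<forall>\<^sub>F \<nu> in sequentially. Re p0 + (norm p')\<^sup>2 < Re (fst (\<phi> \<nu> p))"
    using tendsto_Re[OF fst_lim] \<open>Re q = 0\<close> \<open>Re p0 + (norm p')\<^sup>2 < 0\<close> by (intro order_tendstoD) auto
  then obtain N where "\<forall>\<nu>\<ge>N. Re p0 + (norm p')\<^sup>2 < Re (fst (\<phi> \<nu> p))"
    by (auto simp: eventually_sequentially)
  then have N: "Re p0 + (norm p')\<^sup>2 < Re (fst (\<phi> (\<nu> + N) p))" for \<nu>
    by simp
  have "\<exists>t s A. t > 0 \<and> unitary A \<and> \<phi> (\<nu> + N) = dilation t s A" for \<nu>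
    using subgroup_Aut_dilation_if_Re_gt[OF sub \<phi>] N p by metis
  then obtain t s A where tsA: "\<And>\<nu>. t \<nu> > 0" "\<And>\<nu>. unitary (A \<nu>)"
    "\<And>\<nu>. \<phi> (\<nu> + N) = dilation (t \<nu>) (s \<nu>) (A \<nu>)" by metis
  have fst_\<phi>: "fst (\<phi> (\<nu> + N) p) = of_real (t \<nu>) * p0 + \<i> * of_real (s \<nu>)" for \<nu>
    by (simp add: tsA(3) p dilation_apply)
  have shifted: "(\<lambda>\<nu>. fst (\<phi> (\<nu> + N) p)) \<longlonglongrightarrow> q"
    using LIMSEQ_ignore_initial_segment[OF fst_lim] .
  have "t = (\<lambda>\<nu>. Re (fst (\<phi> (\<nu> + N) p)) / Re p0)"
    using \<open>Re p0 < 0\<close> by (simp add: fst_\<phi> fun_eq_iff)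
  moreover have "(\<lambda>\<nu>. Re (fst (\<phi> (\<nu> + N) p)) / Re p0) \<longlonglongrightarrow> Re q / Re p0"
    by (intro tendsto_intros shifted) (use \<open>Re p0 < 0\<close> in simp)
  ultimately have "t \<longlonglongrightarrow> 0" using \<open>Re q = 0\<close> by simp
  have "s = (\<lambda>\<nu>. Im (fst (\<phi> (\<nu> + N) p)) - t \<nu> * Im p0)"
    by (simp add: fst_\<phi> fun_eq_iff)
  moreover have "(\<lambda>\<nu>. Im (fst (\<phi> (\<nu> + N) p)) - t \<nu> * Im p0) \<longlonglongrightarrow> Im q - 0 * Im p0"
    by (intro tendsto_intros shifted \<open>t \<longlonglongrightarrow> 0\<close>)
  ultimately have "s \<longlonglongrightarrow> Im q" by simp
  moreover have "\<forall>\<nu>. acts_as_dilation (\<phi> (\<nu> + N)) (t \<nu>) (s \<nu>) (A \<nu>)"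
    using tsA by (simp add: acts_as_dilation_def)
  ultimately show ?thesis using \<open>t \<longlonglongrightarrow> 0\<close> by blast
qed

lemma orbit_to_axis_contracting_dilation:
  fixes \<phi> :: "nat \<Rightarrow> ('n::finite pt \<Rightarrow> 'n pt)"
  assumes sub: "subgroup_Aut \<Theta> \<Gamma>" and \<phi>: "\<And>\<nu>. \<phi> \<nu> \<in> \<Gamma>" and "p \<in> siegel_H"
    and "(\<lambda>\<nu>. \<phi> \<nu> p) \<longlonglongrightarrow> (q, 0)" and "Re q = 0"
  obtains g \<tau> \<sigma> B where "g \<in> \<Gamma>" "acts_as_dilation g \<tau> \<sigma> B" "\<tau> < 1"
proof -
  obtain N t s A where R: "\<And>\<nu>. acts_as_dilation (\<phi> (\<nu> + N)) (t \<nu>) (s \<nu>) (A \<nu>)" and "t \<longlonglongrightarrow> 0"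
    using orbit_to_axis_eventually_dilations[OF assms] by blast
  obtain k where "t k < 1"
    using order_tendstoD(2)[OF \<open>t \<longlonglongrightarrow> 0\<close>, of 1] by (auto simp: eventually_sequentially)
  with that[OF \<phi> R] show thesis .
qed

lemma orbit_to_axis_conjugate_limit:
  fixes \<phi> :: "nat \<Rightarrow> ('n::finite pt \<Rightarrow> 'n pt)"
  assumes disc: "discrete_subgroup \<Theta> \<Gamma>" and \<phi>: "\<And>\<nu>. \<phi> \<nu> \<in> \<Gamma>" and "p \<in> siegel_H"
    and "(\<lambda>\<nu>. \<phi> \<nu> p) \<longlonglongrightarrow> (q, 0)" and "Re q = 0"
    and "g \<in> \<Gamma>" and g: "acts_as_dilation g \<tau> \<sigma> B"
  shows "\<exists>g'\<in>\<Gamma>. \<exists>B'. acts_as_dilation g' \<tau> ((1 - \<tau>) * Im q) B'"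
proof -
  have sub: "subgroup_Aut \<Theta> \<Gamma>" using disc by (simp add: discrete_subgroup_def)
  obtain N t s A where R: "\<And>\<nu>. acts_as_dilation (\<phi> (\<nu> + N)) (t \<nu>) (s \<nu>) (A \<nu>)"
    and "t \<longlonglongrightarrow> 0" "s \<longlonglongrightarrow> Im q"
    using orbit_to_axis_eventually_dilations[OF sub assms(2-5)] by blast
  obtain c where "\<And>\<nu>. c \<nu> \<in> \<Gamma>"
    and c: "\<And>\<nu>. acts_as_dilation (c \<nu>) \<tau> ((1 - \<tau>) * s \<nu> + t \<nu> * \<sigma>) (A \<nu> ** B ** ctranspose (A \<nu>))"
    using subgroup_Aut_dilation_conj[OF sub \<phi> \<open>g \<in> \<Gamma>\<close> R g] by metis
  have "\<tau> > 0" using g by (simp add: acts_as_dilation_def)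
  have "(\<lambda>\<nu>. (1 - \<tau>) * s \<nu> + t \<nu> * \<sigma>) \<longlonglongrightarrow> (1 - \<tau>) * Im q + 0 * \<sigma>"
    by (intro tendsto_intros \<open>t \<longlonglongrightarrow> 0\<close> \<open>s \<longlonglongrightarrow> Im q\<close>)
  then have "(\<lambda>\<nu>. (1 - \<tau>) * s \<nu> + t \<nu> * \<sigma>) \<longlonglongrightarrow> (1 - \<tau>) * Im q" by simp
  from discrete_dilation_limit_attained[where \<gamma> = c and t = "\<lambda>_. \<tau>", OF disc \<open>\<And>\<nu>. c \<nu> \<in> \<Gamma>\<close> c
      tendsto_const \<open>\<tau> > 0\<close> this]
  obtain \<nu> where "(1 - \<tau>) * s \<nu> + t \<nu> * \<sigma> = (1 - \<tau>) * Im q" ..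
  with c[of \<nu>] have "acts_as_dilation (c \<nu>) \<tau> ((1 - \<tau>) * Im q) (A \<nu> ** B ** ctranspose (A \<nu>))"
    by simp
  with \<open>c \<nu> \<in> \<Gamma>\<close> show ?thesis by blast
qed

lemma orbit_to_axis_no_vertical_translation:
  fixes \<phi> :: "nat \<Rightarrow> ('n::finite pt \<Rightarrow> 'n pt)"
  assumes disc: "discrete_subgroup \<Theta> \<Gamma>" and \<phi>: "\<And>\<nu>. \<phi> \<nu> \<in> \<Gamma>" and "p \<in> siegel_H"
    and "(\<lambda>\<nu>. \<phi> \<nu> p) \<longlonglongrightarrow> (q, 0)" and "Re q = 0"
    and "g \<in> \<Gamma>" and g: "acts_as_dilation g 1 \<delta> B"
  shows "\<delta> = 0"
proof -
  have sub: "subgroup_Aut \<Theta> \<Gamma>" using disc by (simp add: discrete_subgroup_def)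
  obtain N t s A where R: "\<And>\<nu>. acts_as_dilation (\<phi> (\<nu> + N)) (t \<nu>) (s \<nu>) (A \<nu>)"
    and "t \<longlonglongrightarrow> 0"
    using orbit_to_axis_eventually_dilations[OF sub assms(2-5)] by blast
  obtain c where "\<And>\<nu>. c \<nu> \<in> \<Gamma>"
    and c: "\<And>\<nu>. acts_as_dilation (c \<nu>) 1 ((1 - 1) * s \<nu> + t \<nu> * \<delta>) (A \<nu> ** B ** ctranspose (A \<nu>))"
    using subgroup_Aut_dilation_conj[OF sub \<phi> \<open>g \<in> \<Gamma>\<close> R g] by metis
  have "(\<lambda>\<nu>. (1 - 1) * s \<nu> + t \<nu> * \<delta>) \<longlonglongrightarrow> 0"
    using tendsto_mult_left_zero[OF \<open>t \<longlonglongrightarrow> 0\<close>, of \<delta>] by (simp add: mult.commute)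
  from discrete_dilation_limit_attained[where \<gamma> = c and t = "\<lambda>_. 1", OF disc \<open>\<And>\<nu>. c \<nu> \<in> \<Gamma>\<close> c
      tendsto_const zero_less_one this]
  obtain \<nu> where "(1 - 1) * s \<nu> + t \<nu> * \<delta> = 0" ..
  moreover have "t \<nu> > 0" using R by (simp add: acts_as_dilation_def)
  ultimately show ?thesis by simp
qed

theorem mainTheorem4:
  fixes \<Theta> :: "complex ^ 'n::finite ^ 'n" and \<Gamma> :: "('n pt \<Rightarrow> 'n pt) set" and p :: "'n pt"
  assumes "skew \<Theta>" and "\<Theta> \<noteq> 0"
    and "discrete_subgroup \<Theta> \<Gamma>"
    and "p \<in> siegel_H"
  shows "\<forall>q1 q2. (Re q1 = 0 \<and> (\<exists>\<phi>::nat \<Rightarrow> ('n pt \<Rightarrow> 'n pt). (\<forall>\<nu>. \<phi> \<nu> \<in> \<Gamma>) \<and> inj \<phi>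
                        \<and> (\<lambda>\<nu>. \<phi> \<nu> p) \<longlonglongrightarrow> (q1, 0)))
              \<and> (Re q2 = 0 \<and> (\<exists>\<phi>::nat \<Rightarrow> ('n pt \<Rightarrow> 'n pt). (\<forall>\<nu>. \<phi> \<nu> \<in> \<Gamma>) \<and> inj \<phi>
                        \<and> (\<lambda>\<nu>. \<phi> \<nu> p) \<longlonglongrightarrow> (q2, 0)))
              \<longrightarrow> q1 = q2"
proof (intro allI impI, elim conjE exE)
  fix q1 q2 :: complex and \<phi>1 \<phi>2 :: "nat \<Rightarrow> 'n pt \<Rightarrow> 'n pt"
  assume "Re q1 = 0" "\<forall>\<nu>. \<phi>1 \<nu> \<in> \<Gamma>" and lim1: "(\<lambda>\<nu>. \<phi>1 \<nu> p) \<longlonglongrightarrow> (q1, 0)"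
    and "Re q2 = 0" "\<forall>\<nu>. \<phi>2 \<nu> \<in> \<Gamma>" and lim2: "(\<lambda>\<nu>. \<phi>2 \<nu> p) \<longlonglongrightarrow> (q2, 0)"
  note disc = \<open>discrete_subgroup \<Theta> \<Gamma>\<close>
  then have sub: "subgroup_Aut \<Theta> \<Gamma>" by (simp add: discrete_subgroup_def)
  note orbit1 = \<open>\<forall>\<nu>. \<phi>1 \<nu> \<in> \<Gamma>\<close>[rule_format] \<open>p \<in> siegel_H\<close> lim1 \<open>Re q1 = 0\<close>
  note orbit2 = \<open>\<forall>\<nu>. \<phi>2 \<nu> \<in> \<Gamma>\<close>[rule_format] \<open>p \<in> siegel_H\<close> lim2 \<open>Re q2 = 0\<close>
  obtain g \<tau> \<sigma> B where "g \<in> \<Gamma>" and g: "acts_as_dilation g \<tau> \<sigma> B" and "\<tau> < 1"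
    using orbit_to_axis_contracting_dilation[OF sub orbit1] by blast
  obtain g1 B1 g2 B2 where "g1 \<in> \<Gamma>" "acts_as_dilation g1 \<tau> ((1 - \<tau>) * Im q1) B1"
    and "g2 \<in> \<Gamma>" "acts_as_dilation g2 \<tau> ((1 - \<tau>) * Im q2) B2"
    using orbit_to_axis_conjugate_limit[OF disc orbit1 \<open>g \<in> \<Gamma>\<close> g]
      orbit_to_axis_conjugate_limit[OF disc orbit2 \<open>g \<in> \<Gamma>\<close> g] by blast
  then obtain g' where "g' \<in> \<Gamma>"
    "acts_as_dilation g' 1 (((1 - \<tau>) * Im q2 - (1 - \<tau>) * Im q1) / \<tau>) (ctranspose B1 ** B2)"
    using subgroup_Aut_dilation_quotient[OF sub] by blast
  then have "((1 - \<tau>) * Im q2 - (1 - \<tau>) * Im q1) / \<tau> = 0"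
    by (rule orbit_to_axis_no_vertical_translation[OF disc orbit1])
  moreover have "0 < \<tau>" using g by (simp add: acts_as_dilation_def)
  ultimately show "q1 = q2"
    using \<open>\<tau> < 1\<close> \<open>Re q1 = 0\<close> \<open>Re q2 = 0\<close> by (simp add: complex_eq_iff)
qed

end
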